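(* Let $n\ge 1$, let $t\in[0,1]$ and let $g\in A_n$ be an even permutation. Then there exist even permutations $h,k\in A_n$ with $g=hk$ such that $|\mu_h-t\mu_g|\le \tfrac32$ and $|\mu_k-(1-t)\mu_g|\le\tfrac32$.
   Context: For a permutation $\pi$ of $\{1,\dots,n\}$, $\mu_\pi\in\{0,\dots,n\}$ denotes the number of points moved by $\pi$. *)

theory Defs
  imports "HOL-Combinatorics.Permutations" Complex_Main
begin

definition mu :: "(nat \<Rightarrow> nat) \<Rightarrow> nat" where
  "mu p = card {x. p x \<noteq> x}"

end

theory Submission
  imports Defs
begin

text \<open>Peel off from g a 3-cycle or a double transposition c, writing g = c \<circ> g' with the supports
of c and g' meeting in at most one point, so that \<open>\<mu>\<^sub>g = \<mu>\<^sub>c + \<mu>\<^sub>g' - |overlap|\<close>.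
If \<open>\<mu>\<^sub>c\<close> is already within 3/2 of the target s for the left factor, take h = c and k = g';
otherwise split g' by strong induction on \<open>\<mu>\<close> with target \<open>s - \<mu>\<^sub>c + |overlap|\<close> and put h = c \<circ> h'.
For the supports of c and h' to add up like those of c and g', h' must move the overlap point, so the
induction proves the stronger statement in which a point moved by h is prescribed.\<close>

definition moved :: "(nat \<Rightarrow> nat) \<Rightarrow> nat set" where
  "moved p = {x. p x \<noteq> x}"

lemma mu_eq_card_moved: "mu p = card (moved p)"
  by (simp add: mu_def moved_def)

lemma moved_subset_if_permutes: "p permutes S \<Longrightarrow> moved p \<subseteq> S"
  unfolding moved_def using permutes_not_in by fastforce

lemma finite_moved_if_permutes: "finite S \<Longrightarrow> p permutes S \<Longrightarrow> finite (moved p)"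
  using moved_subset_if_permutes finite_subset by blast

lemma moved_id [simp]: "moved id = {}"
  by (simp add: moved_def)

lemma moved_comp_subset: "moved (p \<circ> q) \<subseteq> moved p \<union> moved q"
  by (auto simp: moved_def)

lemma moved_comp_eq_Un:
  assumes "inj p" "inj q" and overlap: "moved p \<inter> moved q \<subseteq> {z}"
  shows "moved (p \<circ> q) = moved p \<union> moved q"
proof (intro equalityI moved_comp_subset subsetI)
  fix x assume x: "x \<in> moved p \<union> moved q"
  show "x \<in> moved (p \<circ> q)"
  proof (cases "q x = x")
    case True
    then show ?thesis using x by (auto simp: moved_def)
  next
    case False
    show ?thesis
    proof (cases "p x = x")
      case True
      then have "p (q x) \<noteq> x" using False injD[OF \<open>inj p\<close>] by metis
      then show ?thesis by (simp add: moved_def)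
    next
      case False': False
      then have "x = z" using overlap False by (auto simp: moved_def)
      have "q (q x) \<noteq> q x" using False injD[OF \<open>inj q\<close>] by metis
      then have "p (q x) = q x" using overlap False \<open>x = z\<close> by (auto simp: moved_def)
      then show ?thesis using False by (simp add: moved_def)
    qed
  qed
qed

lemma mu_comp_add_card_overlap:
  assumes "finite S" "p permutes S" "q permutes S" "moved p \<inter> moved q \<subseteq> {z}"
  shows "mu (p \<circ> q) + card (moved p \<inter> moved q) = mu p + mu q"
  using card_Un_Int[OF finite_moved_if_permutes finite_moved_if_permutes] assms
    moved_comp_eq_Un[OF permutes_inj permutes_inj]
  by (simp add: mu_eq_card_moved)

lemma evenperm_comp_permutes:
  "finite S \<Longrightarrow> p permutes S \<Longrightarrow> q permutes S \<Longrightarrow> evenperm p \<Longrightarrow> evenperm q \<Longrightarrow> evenperm (p \<circ> q)"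
  by (simp add: evenperm_comp permutes_imp_permutation)

lemma evenperm_transpose_comp_transpose:
  "a \<noteq> b \<Longrightarrow> c \<noteq> d \<Longrightarrow> evenperm (Transposition.transpose a b \<circ> Transposition.transpose c d)"
  by (simp add: evenperm_comp permutation_swap_id evenperm_swap)

lemma permutes_transpose_comp_transpose:
  "{a, b, c, d} \<subseteq> S \<Longrightarrow> Transposition.transpose a b \<circ> Transposition.transpose c d permutes S"
  by (simp add: permutes_compose permutes_swap_id)

lemma moved_transpose_comp_transpose:
  assumes "a \<noteq> b" "c \<noteq> d" "{a, b} \<noteq> {c, d}"
  shows "moved (Transposition.transpose a b \<circ> Transposition.transpose c d) = {a, b, c, d}"
  using assms by (auto simp: moved_def transpose_def doubleton_eq_iff)

lemma permutes_evenperm_transpose_comp_transpose_comp: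
  assumes "finite S" "g permutes S" "evenperm g" "{a, b, c, d} \<subseteq> S" "a \<noteq> b" "c \<noteq> d"
  shows "Transposition.transpose a b \<circ> Transposition.transpose c d \<circ> g permutes S"
    and "evenperm (Transposition.transpose a b \<circ> Transposition.transpose c d \<circ> g)"
  using assms by (simp_all add: permutes_compose permutes_transpose_comp_transpose
      evenperm_comp_permutes evenperm_transpose_comp_transpose)

definition balanced_split ::
    "nat set \<Rightarrow> (nat \<Rightarrow> nat) \<Rightarrow> real \<Rightarrow> (nat \<Rightarrow> nat) \<Rightarrow> (nat \<Rightarrow> nat) \<Rightarrow> bool" where
  "balanced_split S g s h k \<longleftrightarrow>
     h permutes S \<and> evenperm h \<and> k permutes S \<and> evenperm k \<and> g = h \<circ> k \<and> moved h \<subseteq> moved g \<and>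
     \<bar>real (mu h) - s\<bar> \<le> 3/2 \<and> \<bar>real (mu k) - (real (mu g) - s)\<bar> \<le> 3/2"

definition splits_through :: "nat set \<Rightarrow> (nat \<Rightarrow> nat) \<Rightarrow> bool" where
  "splits_through S g \<longleftrightarrow>
     (\<forall>x s. x \<in> moved g \<longrightarrow> 3/2 \<le> s \<longrightarrow> s \<le> real (mu g) \<longrightarrow>
        (\<exists>h k. balanced_split S g s h k \<and> x \<in> moved h))"

lemma balanced_split_exists:
  assumes g: "g permutes S" "evenperm g" "splits_through S g" and s: "0 \<le> s" "s \<le> real (mu g)"
  shows "\<exists>h k. balanced_split S g s h k"
proof (cases "s \<le> 3/2")
  case True
  then have "balanced_split S g s id g"
    using g s by (simp add: balanced_split_def mu_eq_card_moved)
  then show ?thesis by blast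
next
  case False
  then have "moved g \<noteq> {}" using s by (auto simp: mu_eq_card_moved)
  then obtain x where "x \<in> moved g" by blast
  then show ?thesis using g s False unfolding splits_through_def by force
qed

lemma balanced_split_keep_overlap:
  assumes g: "g permutes S" "evenperm g" "splits_through S g" and overlap: "A \<inter> moved g \<subseteq> {z}"
    and s: "A \<inter> moved g \<noteq> {} \<Longrightarrow> 3/2 \<le> s" "0 \<le> s" "s \<le> real (mu g)"
  shows "\<exists>h k. balanced_split S g s h k \<and> A \<inter> moved h = A \<inter> moved g"
proof (cases "A \<inter> moved g = {}")
  case True
  obtain h k where split: "balanced_split S g s h k"
    using balanced_split_exists[OF g] s by blast
  then have "moved h \<subseteq> moved g" unfolding balanced_split_def by blast
  then show ?thesis using split True by blast
next
  case False
  then have O: "A \<inter> moved g = {z}" using overlap by blast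
  then obtain h k where split: "balanced_split S g s h k" and z: "z \<in> moved h"
    using g(3) False s unfolding splits_through_def by blast
  have "moved h \<subseteq> moved g" using split unfolding balanced_split_def by blast
  then have "A \<inter> moved h = A \<inter> moved g" using O z by auto
  then show ?thesis using split by blast
qed

lemma balanced_split_compose_left:
  assumes S: "finite S" and c: "c permutes S" "evenperm c"
    and overlap: "moved c \<inter> moved g \<subseteq> {z}" "moved c \<inter> moved h = moved c \<inter> moved g"
    and split: "balanced_split S g (s - real (mu c) + real (card (moved c \<inter> moved g))) h k"
  shows "balanced_split S (c \<circ> g) s (c \<circ> h) k"
proof -
  from split have h: "h permutes S" "evenperm h" and k: "k permutes S" "evenperm k"
    and g: "g permutes S" and "g = h \<circ> k" and "moved h \<subseteq> moved g"
    and bounds: "\<bar>real (mu h) - (s - real (mu c) + real (card (moved c \<inter> moved g)))\<bar> \<le> 3/2"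
      "\<bar>real (mu k) - (real (mu g) - (s - real (mu c) + real (card (moved c \<inter> moved g))))\<bar> \<le> 3/2"
    unfolding balanced_split_def by (auto intro: permutes_compose)
  have "mu (c \<circ> g) + card (moved c \<inter> moved g) = mu c + mu g"
    using mu_comp_add_card_overlap[OF S c(1) g overlap(1)] .
  moreover have "mu (c \<circ> h) + card (moved c \<inter> moved g) = mu c + mu h"
    using mu_comp_add_card_overlap[OF S c(1) h(1)] overlap by simp
  ultimately have "real (mu (c \<circ> g)) + real (card (moved c \<inter> moved g)) = real (mu c) + real (mu g)"
    "real (mu (c \<circ> h)) + real (card (moved c \<inter> moved g)) = real (mu c) + real (mu h)"
    by (metis of_nat_add)+
  moreover have "moved (c \<circ> h) \<subseteq> moved (c \<circ> g)"
    using moved_comp_eq_Un[OF permutes_inj[OF c(1)] permutes_inj[OF g] overlap(1)]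
      moved_comp_eq_Un[of c h z] overlap \<open>moved h \<subseteq> moved g\<close> permutes_inj[OF c(1)] permutes_inj[OF h(1)]
    by auto
  moreover have "\<bar>real (mu (c \<circ> h)) - s\<bar> \<le> 3/2"
    "\<bar>real (mu k) - (real (mu (c \<circ> g)) - s)\<bar> \<le> 3/2"
    using calculation(1,2) bounds by linarith+
  ultimately show ?thesis
    using c h k \<open>g = h \<circ> k\<close> S
    by (auto simp: balanced_split_def comp_assoc permutes_compose evenperm_comp_permutes)
qed

lemma balanced_split_peel:
  assumes S: "finite S" and c: "c permutes S" "evenperm c" "2 \<le> mu c"
    and g': "g' permutes S" "evenperm g'" "mu g' < mu g \<Longrightarrow> splits_through S g'"
    and g: "g = c \<circ> g'" and overlap: "moved c \<inter> moved g' \<subseteq> {z}"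
    and x: "x \<in> moved c" and s: "real (mu c) - 3/2 \<le> s" "s \<le> real (mu g)"
  shows "\<exists>h k. balanced_split S g s h k \<and> x \<in> moved h"
proof -
  let ?O = "moved c \<inter> moved g'"
  have card_O: "card ?O \<le> 1"
    using card_mono[OF _ overlap] by simp
  have "mu g + card ?O = mu c + mu g'"
    unfolding g by (rule mu_comp_add_card_overlap[OF S c(1) g'(1) overlap])
  then have mu_g: "real (mu g) + real (card ?O) = real (mu c) + real (mu g')"
    by (metis of_nat_add)
  have moved_g: "moved g = moved c \<union> moved g'"
    unfolding g by (rule moved_comp_eq_Un[OF permutes_inj[OF c(1)] permutes_inj[OF g'(1)] overlap])
  show ?thesis
  proof (cases "s \<le> real (mu c) + 1/2")
    case True
    have "\<bar>real (mu c) - s\<bar> \<le> 3/2" "\<bar>real (mu g') - (real (mu g) - s)\<bar> \<le> 3/2"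
      using True s mu_g card_O by linarith+
    then have "balanced_split S g s c g'"
      using c g' g moved_g by (auto simp: balanced_split_def)
    then show ?thesis using x by blast
  next
    case False
    have "mu g' < mu g" using mu_g card_O c(3) by linarith
    then have through: "splits_through S g'" by (rule g'(3))
    let ?s' = "s - real (mu c) + real (card ?O)"
    have "?O \<noteq> {} \<Longrightarrow> card ?O = 1" using subset_singletonD[OF overlap] by auto
    then have "?O \<noteq> {} \<Longrightarrow> 3/2 \<le> ?s'" "0 \<le> ?s'" "?s' \<le> real (mu g')"
      using False s mu_g card_O by auto
    then obtain h' k' where split: "balanced_split S g' ?s' h' k'" and same: "moved c \<inter> moved h' = ?O"
      using balanced_split_keep_overlap[OF g'(1,2) through overlap] by blast
    have "balanced_split S g s (c \<circ> h') k'"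
      unfolding g by (rule balanced_split_compose_left[OF S c(1,2) overlap same split])
    moreover have "moved c \<subseteq> moved (c \<circ> h')"
      using moved_comp_eq_Un[OF permutes_inj[OF c(1)], of h' z] same overlap split
      by (auto simp: balanced_split_def permutes_inj)
    ultimately show ?thesis using x by blast
  qed
qed

lemma balanced_split_through_long_orbit:
  assumes S: "finite S" and g: "g permutes S" "evenperm g"
    and IH: "\<And>g'. g' permutes S \<Longrightarrow> evenperm g' \<Longrightarrow> mu g' < mu g \<Longrightarrow> splits_through S g'"
    and x: "x \<in> moved g" "g (g x) \<noteq> x" and s: "3/2 \<le> s" "s \<le> real (mu g)"
  shows "\<exists>h k. balanced_split S g s h k \<and> x \<in> moved h"
proof -
  define y where "y = g x"
  define z where "z = g y"
  have "x \<noteq> y" "x \<noteq> z" using x by (auto simp: moved_def y_def z_def)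
  moreover have "y \<noteq> z" using \<open>x \<noteq> y\<close> inj_eq[OF permutes_inj[OF g(1)]] by (simp add: y_def z_def)
  ultimately have distinct: "x \<noteq> y" "x \<noteq> z" "y \<noteq> z" .
  have "{x, y, z} \<subseteq> S"
    using x(1) moved_subset_if_permutes[OF g(1)] permutes_in_image[OF g(1)] by (auto simp: y_def z_def)
  define c where "c = Transposition.transpose x y \<circ> Transposition.transpose y z"
  define g' where "g' = Transposition.transpose y z \<circ> Transposition.transpose x y \<circ> g"
  have c: "c permutes S" "evenperm c" "moved c = {x, y, z}"
    unfolding c_def using \<open>{x, y, z} \<subseteq> S\<close> distinct
    by (auto simp: permutes_transpose_comp_transpose evenperm_transpose_comp_transpose
        moved_transpose_comp_transpose doubleton_eq_iff)
  have g': "g' permutes S" "evenperm g'"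
    unfolding g'_def
    using permutes_evenperm_transpose_comp_transpose_comp[of S g y z x y]
      S g \<open>{x, y, z} \<subseteq> S\<close> distinct by auto
  have "g' x = x" "g' y = y" using distinct by (simp_all add: g'_def y_def z_def)
  then have "moved c \<inter> moved g' \<subseteq> {z}" using c(3) by (auto simp: moved_def)
  moreover have "g = c \<circ> g'" by (simp add: c_def g'_def fun_eq_iff)
  moreover have "mu c = 3" using c(3) distinct by (simp add: mu_eq_card_moved)
  ultimately show ?thesis
    using balanced_split_peel[OF S c(1,2) _ g' _ _ _ _ _ s(2)] IH[OF g'] c(3) s(1) by auto
qed

lemma balanced_split_through_transposition:
  assumes S: "finite S" and g: "g permutes S" "evenperm g"
    and IH: "\<And>g'. g' permutes S \<Longrightarrow> evenperm g' \<Longrightarrow> mu g' < mu g \<Longrightarrow> splits_through S g'"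
    and x: "x \<in> moved g" "g (g x) = x" and s: "3/2 \<le> s" "s \<le> real (mu g)"
  shows "\<exists>h k. balanced_split S g s h k \<and> x \<in> moved h"
proof -
  define y where "y = g x"
  have "x \<noteq> y" using x by (auto simp: moved_def y_def)
  have gxy: "g x = y" "g y = x" using x by (simp_all add: y_def)
  obtain q where q: "q \<in> moved g" "q \<noteq> x" "q \<noteq> y"
  proof (rule ccontr)
    assume "\<not> thesis"
    then have "w \<in> moved g \<Longrightarrow> w = x \<or> w = y" for w using that by blast
    then have "g = Transposition.transpose x y"
      using gxy by (auto simp: fun_eq_iff transpose_def moved_def)
    then show False using g(2) \<open>x \<noteq> y\<close> by (simp add: evenperm_swap)
  qed
  define r where "r = g q"
  have inj_g: "g a = g b \<longleftrightarrow> a = b" for a b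
    using inj_eq[OF permutes_inj[OF g(1)]] .
  have distinct: "x \<noteq> y" "x \<noteq> q" "y \<noteq> q" "x \<noteq> r" "y \<noteq> r" "q \<noteq> r"
    using \<open>x \<noteq> y\<close> q gxy inj_g[of q x] inj_g[of q y] by (auto simp: r_def moved_def)
  have "g r \<noteq> r" using distinct inj_g[of r q] by (simp add: r_def)
  then have "{x, y, q, r} \<subseteq> moved g" using x(1) q(1) gxy distinct by (auto simp: moved_def)
  then have "{x, y, q, r} \<subseteq> S" using moved_subset_if_permutes[OF g(1)] by blast
  show ?thesis
  proof (cases "s \<le> 5/2")
    case True
    \<comment> \<open>A double transposition would overshoot, so the 3-cycle on x, y, q is split off directly;
      it meets k in two points, but crude bounds on \<open>\<mu>\<^sub>k\<close> suffice.\<close>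
    define c where "c = Transposition.transpose x y \<circ> Transposition.transpose y q"
    define k where "k = Transposition.transpose y q \<circ> Transposition.transpose x y \<circ> g"
    have c: "c permutes S" "evenperm c" "moved c = {x, y, q}"
      unfolding c_def using \<open>{x, y, q, r} \<subseteq> S\<close> distinct
      by (auto simp: permutes_transpose_comp_transpose evenperm_transpose_comp_transpose
          moved_transpose_comp_transpose doubleton_eq_iff)
    have k: "k permutes S" "evenperm k"
      unfolding k_def
      using permutes_evenperm_transpose_comp_transpose_comp[of S g y q x y]
        S g \<open>{x, y, q, r} \<subseteq> S\<close> distinct by auto
    have g_ck: "g = c \<circ> k" by (simp add: c_def k_def fun_eq_iff)
    have "moved (Transposition.transpose y q \<circ> Transposition.transpose x y) = {y, q, x}"
      using distinct by (auto simp: moved_transpose_comp_transpose doubleton_eq_iff)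
    then have "moved k \<subseteq> {y, q, x} \<union> moved g"
      using moved_comp_subset unfolding k_def by blast
    moreover have "k x = x" using distinct by (simp add: k_def gxy)
    ultimately have "moved k \<subseteq> moved g - {x}"
      using \<open>{x, y, q, r} \<subseteq> moved g\<close> by (auto simp: moved_def)
    then have "mu k \<le> mu g - 1"
      unfolding mu_eq_card_moved
      using card_mono[OF finite_Diff[OF finite_moved_if_permutes[OF S g(1)]]] x(1)
      by (metis card_Diff_singleton)
    moreover have "mu g \<le> mu c + mu k"
    proof -
      have "moved g \<subseteq> moved c \<union> moved k" using moved_comp_subset g_ck by metis
      then have "card (moved g) \<le> card (moved c \<union> moved k)"
        using finite_moved_if_permutes[OF S] c(1) k(1) by (simp add: card_mono)
      then show ?thesis using card_Un_le[of "moved c" "moved k"] by (simp add: mu_eq_card_moved)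
    qed
    moreover have "mu c = 3" using c(3) distinct by (simp add: mu_eq_card_moved)
    moreover have "1 \<le> mu g" using x(1) finite_moved_if_permutes[OF S g(1)]
      by (auto simp: mu_eq_card_moved card_gt_0_iff Suc_le_eq)
    ultimately have "\<bar>real (mu c) - s\<bar> \<le> 3/2" "\<bar>real (mu k) - (real (mu g) - s)\<bar> \<le> 3/2"
      using s True by linarith+
    then have "balanced_split S g s c k"
      using c k g_ck \<open>{x, y, q, r} \<subseteq> moved g\<close> by (auto simp: balanced_split_def)
    then show ?thesis using c(3) by blast
  next
    case False
    define d where "d = Transposition.transpose x y \<circ> Transposition.transpose q r"
    define g' where "g' = Transposition.transpose q r \<circ> Transposition.transpose x y \<circ> g"
    have d: "d permutes S" "evenperm d" "moved d = {x, y, q, r}"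
      unfolding d_def using \<open>{x, y, q, r} \<subseteq> S\<close> distinct
      by (auto simp: permutes_transpose_comp_transpose evenperm_transpose_comp_transpose
          moved_transpose_comp_transpose doubleton_eq_iff)
    have g': "g' permutes S" "evenperm g'"
      unfolding g'_def
      using permutes_evenperm_transpose_comp_transpose_comp[of S g q r x y]
        S g \<open>{x, y, q, r} \<subseteq> S\<close> distinct by auto
    have "g' x = x" "g' y = y" "g' q = q" using distinct by (simp_all add: g'_def gxy r_def)
    then have "moved d \<inter> moved g' \<subseteq> {r}" using d(3) by (auto simp: moved_def)
    moreover have "g = d \<circ> g'" by (simp add: d_def g'_def fun_eq_iff)
    moreover have "mu d = 4" using d(3) distinct by (simp add: mu_eq_card_moved)
    ultimately show ?thesis
      using balanced_split_peel[OF S d(1,2) _ g' _ _ _ _ _ s(2)] IH[OF g'] d(3) False by auto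
  qed
qed

lemma splits_through_if_evenperm:
  assumes S: "finite S"
  shows "g permutes S \<Longrightarrow> evenperm g \<Longrightarrow> splits_through S g"
proof (induction "mu g" arbitrary: g rule: less_induct)
  case less
  show ?case unfolding splits_through_def
  proof (intro allI impI)
    fix x s assume "x \<in> moved g" "3/2 \<le> s" "s \<le> real (mu g)"
    then show "\<exists>h k. balanced_split S g s h k \<and> x \<in> moved h"
      using balanced_split_through_long_orbit[OF S less.prems less.hyps]
        balanced_split_through_transposition[OF S less.prems less.hyps]
      by (cases "g (g x) = x") auto
  qed
qed

theorem lemma2p2:
  fixes n :: nat and t :: real and g :: "nat \<Rightarrow> nat"
  assumes "n \<ge> 1" and "0 \<le> t" and "t \<le> 1"
    and "g permutes {1..n}" and "evenperm g"
  shows "\<exists>h k. h permutes {1..n} \<and> evenperm h \<and> k permutes {1..n} \<and> evenperm k \<and>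
           g = h \<circ> k \<and>
           \<bar>real (mu h) - t * real (mu g)\<bar> \<le> 3/2 \<and>
           \<bar>real (mu k) - (1 - t) * real (mu g)\<bar> \<le> 3/2"
proof -
  have "splits_through {1..n} g"
    using splits_through_if_evenperm assms(4,5) by blast
  moreover have "0 \<le> t * real (mu g)" "t * real (mu g) \<le> real (mu g)"
    using assms(2,3) by (simp_all add: mult_left_le_one_le)
  ultimately obtain h k where "balanced_split {1..n} g (t * real (mu g)) h k"
    using balanced_split_exists assms(4,5) by blast
  then show ?thesis by (auto simp: balanced_split_def left_diff_distrib)
qed

end
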